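(* Let $P\subset\mathbb Z^n_+$ be a discrete polymatroid and $\alpha=(k_1,\ldots,k_n)\in\mathbb N^n$. Let $\gamma:S_{P^\alpha}\to S_P$ be the $K$-algebra homomorphism with $\gamma(y_{\mathbf u})=y_{\pi_0(\mathbf u)}$ for $\mathbf u\in\mathcal B_{P^\alpha}$. Then $\gamma(I_{P^\alpha})=I_P$.
   Context: $K$ is a field, $\mathbb N$ the positive integers, $\mathbb Z^n_+$ the nonnegative integer vectors; $\mathbf u\preceq\mathbf v$ means componentwise $\le$, $\epsilon_i$ is the $i$th unit vector, $|\mathbf u|=\sum_i\mathbf u(i)$. A discrete polymatroid on $[n]$ is a nonempty finite set $P\subset\mathbb Z^n_+$ such that (D1) if $\mathbf v\in\mathbb Z^n_+$, $\mathbf v\preceq\mathbf u$ for some $\mathbf u\in P$, then $\mathbf v\in P$; (D2) if $\mathbf u,\mathbf v\in P$ with $|\mathbf u|<|\mathbf v|$ then there is $i$ with $\mathbf u(i)<\mathbf v(i)$ and $\mathbf u+\epsilon_i\in P$. A base of $P$ is a $\preceq$-maximal element; $\mathcal B_P$ is the set of bases. $S_P=K[y_{\mathbf u}:\mathbf u\in\mathcal B_P]$, $K[P]=K[\mathbf x^{\mathbf u}:\mathbf u\in\mathcal B_P]\subset K[x_1,\ldots,x_n]$ with $\mathbf x^{\mathbf u}=x_1^{\mathbf u(1)}\cdots x_n^{\mathbf u(n)}$, and $I_P$ is the kernel of $S_P\to K[P]$, $y_{\mathbf u}\mapsto\mathbf x^{\mathbf u}$. For $\alpha=(k_1,\ldots,k_n)$,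 index the coordinates of $\mathbb Z^{|\alpha|}$, $|\alpha|=k_1+\cdots+k_n$, by pairs $(i,j)$, $1\le i\le n$, $1\le j\le k_i$, and let $\pi_0:\mathbb Z^{|\alpha|}\to\mathbb Z^n$, $\pi_0(\mathbf w)(i)=\sum_{j=1}^{k_i}\mathbf w(i,j)$. For $\mathbf u\in\mathbb Z^n_+$ let $\mathbf u^\alpha=\{\mathbf w\in\mathbb Z^{|\alpha|}_+:\pi_0(\mathbf w)=\mathbf u\}$. $P^\alpha\subset\mathbb Z^{|\alpha|}_+$ is the discrete polymatroid whose set of bases is $\mathcal B_{P^\alpha}=\bigcup_{\mathbf u\in\mathcal B_P}\mathbf u^\alpha$; $S_{P^\alpha}$, $K[P^\alpha]$, $I_{P^\alpha}$ are defined analogously (in variables $x_{ij}$). *)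

theory Defs
  imports Main "HOL-Library.Poly_Mapping"
begin

definition vle :: "('i \<Rightarrow>\<^sub>0 nat) \<Rightarrow> ('i \<Rightarrow>\<^sub>0 nat) \<Rightarrow> bool" where
  "vle u v \<longleftrightarrow> (\<forall>i. Poly_Mapping.lookup u i \<le> Poly_Mapping.lookup v i)"

definition vnorm :: "('i \<Rightarrow>\<^sub>0 nat) \<Rightarrow> nat" where
  "vnorm u = (\<Sum>i\<in>Poly_Mapping.keys u. Poly_Mapping.lookup u i)"

definition unitv :: "'i \<Rightarrow> ('i \<Rightarrow>\<^sub>0 nat)" where
  "unitv i = Poly_Mapping.single i 1"

definition discrete_polymatroid :: "'i set \<Rightarrow> ('i \<Rightarrow>\<^sub>0 nat) set \<Rightarrow> bool" where
  "discrete_polymatroid E P \<longleftrightarrow>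
     finite P \<and> P \<noteq> {} \<and> (\<forall>u\<in>P. Poly_Mapping.keys u \<subseteq> E) \<and>
     (\<forall>u\<in>P. \<forall>v. vle v u \<longrightarrow> v \<in> P) \<and>
     (\<forall>u\<in>P. \<forall>v\<in>P. vnorm u < vnorm v \<longrightarrow>
        (\<exists>i. Poly_Mapping.lookup u i < Poly_Mapping.lookup v i \<and> u + unitv i \<in> P))"

definition bases :: "('i \<Rightarrow>\<^sub>0 nat) set \<Rightarrow> ('i \<Rightarrow>\<^sub>0 nat) set" where
  "bases P = {u\<in>P. \<forall>v\<in>P. vle u v \<longrightarrow> v = u}"

section \<open>Polynomials: ('v \<Rightarrow>0 nat) \<Rightarrow>0 'k, monomials are exponent vectors\<close>

definition Var :: "'v \<Rightarrow> (('v \<Rightarrow>\<^sub>0 nat) \<Rightarrow>\<^sub>0 'k::comm_ring_1)" where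
  "Var v = Poly_Mapping.single (Poly_Mapping.single v 1) 1"

definition subst :: "('v \<Rightarrow> (('w \<Rightarrow>\<^sub>0 nat) \<Rightarrow>\<^sub>0 'k::comm_ring_1))
     \<Rightarrow> (('v \<Rightarrow>\<^sub>0 nat) \<Rightarrow>\<^sub>0 'k) \<Rightarrow> (('w \<Rightarrow>\<^sub>0 nat) \<Rightarrow>\<^sub>0 'k)" where
  "subst \<sigma> p = (\<Sum>m\<in>Poly_Mapping.keys p. Poly_Mapping.single 0 (Poly_Mapping.lookup p m) * (\<Prod>v\<in>Poly_Mapping.keys m. \<sigma> v ^ Poly_Mapping.lookup m v))"

definition polyring :: "'v set \<Rightarrow> (('v \<Rightarrow>\<^sub>0 nat) \<Rightarrow>\<^sub>0 'k::zero) set" where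
  "polyring B = {p. \<forall>m\<in>Poly_Mapping.keys p. Poly_Mapping.keys m \<subseteq> B}"

text \<open>Toric ideal of a set of bases B: kernel of S_B -> K[x], y_u |-> x^u.\<close>
definition toric_ideal :: "('i \<Rightarrow>\<^sub>0 nat) set \<Rightarrow> ((('i \<Rightarrow>\<^sub>0 nat) \<Rightarrow>\<^sub>0 nat) \<Rightarrow>\<^sub>0 'k::comm_ring_1) set" where
  "toric_ideal B = {p \<in> polyring B. subst (\<lambda>u. Poly_Mapping.single u 1) p = 0}"

definition alpha_index :: "nat \<Rightarrow> (nat \<Rightarrow> nat) \<Rightarrow> (nat \<times> nat) set" where
  "alpha_index n k = {(i,j). 1 \<le> i \<and> i \<le> n \<and> 1 \<le> j \<and> j \<le> k i}"

definition pi0 :: "nat \<Rightarrow> (nat \<Rightarrow> nat) \<Rightarrow> ((nat \<times> nat) \<Rightarrow>\<^sub>0 nat) \<Rightarrow> (nat \<Rightarrow>\<^sub>0 nat)" where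
  "pi0 n k w = Abs_poly_mapping (\<lambda>i. if i \<in> {1..n} then (\<Sum>j\<in>{1..k i}. Poly_Mapping.lookup w (i,j)) else 0)"

definition alpha_fibre :: "nat \<Rightarrow> (nat \<Rightarrow> nat) \<Rightarrow> (nat \<Rightarrow>\<^sub>0 nat) \<Rightarrow> ((nat \<times> nat) \<Rightarrow>\<^sub>0 nat) set" where
  "alpha_fibre n k u = {w. Poly_Mapping.keys w \<subseteq> alpha_index n k \<and> pi0 n k w = u}"

text \<open>Set of bases of P^alpha.\<close>
definition bases_alpha :: "nat \<Rightarrow> (nat \<Rightarrow> nat) \<Rightarrow> (nat \<Rightarrow>\<^sub>0 nat) set \<Rightarrow> ((nat \<times> nat) \<Rightarrow>\<^sub>0 nat) set" where
  "bases_alpha n k P = (\<Union>u\<in>bases P. alpha_fibre n k u)"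

end

theory Submission
  imports Defs
begin

text \<open>
  Both inclusions come from one observation: if a map f of base sets is induced by a map g of
  coordinates (f a = push g a), then the substitution y_a \<mapsto> y_(f a) intertwines the toric maps
  up to the substitution x_i \<mapsto> x_(g i), hence carries toric ideals into toric ideals.
  For \<gamma> take g = fst, since pi0 sums over the second index.  Conversely, placing u in the
  first column, g i = (i, 1), embeds the bases of P into those of P^\<alpha> as a section of pi0;
  the induced \<delta> maps I_P into I_(P^\<alpha>) and \<gamma> \<circ> \<delta> is the identity on S_P, so every
  element of I_P lies in the image of \<gamma>.
\<close>

definition monom :: "('v \<Rightarrow> (('w \<Rightarrow>\<^sub>0 nat) \<Rightarrow>\<^sub>0 'k::comm_ring_1)) \<Rightarrow> ('v \<Rightarrow>\<^sub>0 nat) \<Rightarrow> (('w \<Rightarrow>\<^sub>0 nat) \<Rightarrow>\<^sub>0 'k)" where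
  "monom \<sigma> m = (\<Prod>v\<in>Poly_Mapping.keys m. \<sigma> v ^ Poly_Mapping.lookup m v)"

lemma subst_monom: "subst \<sigma> p = (\<Sum>m\<in>Poly_Mapping.keys p. Poly_Mapping.single 0 (Poly_Mapping.lookup p m) * monom \<sigma> m)"
  by (simp add: subst_def monom_def)

lemma subst_alt:
  assumes "finite S" "Poly_Mapping.keys p \<subseteq> S"
  shows "subst \<sigma> p = (\<Sum>m\<in>S. Poly_Mapping.single 0 (Poly_Mapping.lookup p m) * monom \<sigma> m)"
  unfolding subst_monom
  by (rule sum.mono_neutral_left) (use assms in \<open>auto simp: in_keys_iff\<close>)

lemma monom_alt:
  assumes "finite S" "Poly_Mapping.keys m \<subseteq> S"
  shows "monom \<sigma> m = (\<Prod>v\<in>S. \<sigma> v ^ Poly_Mapping.lookup m v)"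
  unfolding monom_def
  by (rule prod.mono_neutral_left) (use assms in \<open>auto simp: in_keys_iff\<close>)

lemma monom_add: "monom \<sigma> (a + b) = monom \<sigma> a * monom \<sigma> b"
proof -
  let ?S = "Poly_Mapping.keys a \<union> Poly_Mapping.keys b"
  have "monom \<sigma> (a+b) = (\<Prod>v\<in>?S. \<sigma> v ^ Poly_Mapping.lookup (a+b) v)"
    by (rule monom_alt) (auto simp: keys_add)
  also have "\<dots> = (\<Prod>v\<in>?S. \<sigma> v ^ Poly_Mapping.lookup a v) * (\<Prod>v\<in>?S. \<sigma> v ^ Poly_Mapping.lookup b v)"
    by (simp add: lookup_add power_add prod.distrib)
  also have "\<dots> = monom \<sigma> a * monom \<sigma> b"
    by (simp add: monom_alt[of ?S a] monom_alt[of ?S b])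
  finally show ?thesis .
qed

lemma monom_zero[simp]: "monom \<sigma> 0 = 1"
  by (simp add: monom_def)

lemma subst_add: "subst \<sigma> (p + q) = subst \<sigma> p + subst \<sigma> q"
proof -
  let ?S = "Poly_Mapping.keys p \<union> Poly_Mapping.keys q"
  have "subst \<sigma> (p+q) = (\<Sum>m\<in>?S. Poly_Mapping.single 0 (Poly_Mapping.lookup (p+q) m) * monom \<sigma> m)"
    by (rule subst_alt) (auto simp: keys_add)
  also have "\<dots> = (\<Sum>m\<in>?S. Poly_Mapping.single 0 (Poly_Mapping.lookup p m) * monom \<sigma> m)
     + (\<Sum>m\<in>?S. Poly_Mapping.single 0 (Poly_Mapping.lookup q m) * monom \<sigma> m)"
    by (simp add: lookup_add single_add distrib_right sum.distrib)
  also have "\<dots> = subst \<sigma> p + subst \<sigma> q"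
    by (simp add: subst_alt[of ?S p] subst_alt[of ?S q])
  finally show ?thesis .
qed

lemma subst_zero[simp]: "subst \<sigma> 0 = 0"
  by (simp add: subst_def)

lemma subst_sum: "subst \<sigma> (sum f A) = (\<Sum>a\<in>A. subst \<sigma> (f a))"
  by (induction A rule: infinite_finite_induct) (auto simp: subst_add)

lemma subst_single: "subst \<sigma> (Poly_Mapping.single m c) = Poly_Mapping.single 0 c * monom \<sigma> m"
  by (simp add: subst_monom)

lemma sum_single_lookup: "p = (\<Sum>m\<in>Poly_Mapping.keys p. Poly_Mapping.single m (Poly_Mapping.lookup p m))"
proof (rule poly_mapping_eqI)
  fix x
  show "Poly_Mapping.lookup p x = Poly_Mapping.lookup (\<Sum>m\<in>Poly_Mapping.keys p. Poly_Mapping.single m (Poly_Mapping.lookup p m)) x"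
    by (simp add: lookup_sum lookup_single when_def in_keys_iff)
qed

lemma subst_mult: "subst \<sigma> (p * q) = subst \<sigma> p * subst \<sigma> q"
proof -
  have "p * q = (\<Sum>m\<in>Poly_Mapping.keys p. \<Sum>m'\<in>Poly_Mapping.keys q.
      Poly_Mapping.single m (Poly_Mapping.lookup p m) * Poly_Mapping.single m' (Poly_Mapping.lookup q m'))"
    by (subst sum_single_lookup[of p], subst sum_single_lookup[of q]) (simp add: sum_product)
  hence "subst \<sigma> (p*q) = (\<Sum>m\<in>Poly_Mapping.keys p. \<Sum>m'\<in>Poly_Mapping.keys q.
      subst \<sigma> (Poly_Mapping.single m (Poly_Mapping.lookup p m)) * subst \<sigma> (Poly_Mapping.single m' (Poly_Mapping.lookup q m')))"
    by (simp add: subst_sum mult_single subst_single monom_add mult_ac)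
  also have "\<dots> = subst \<sigma> (\<Sum>m\<in>Poly_Mapping.keys p. Poly_Mapping.single m (Poly_Mapping.lookup p m))
     * subst \<sigma> (\<Sum>m\<in>Poly_Mapping.keys q. Poly_Mapping.single m (Poly_Mapping.lookup q m))"
    by (simp add: subst_sum sum_product)
  finally show ?thesis by (simp flip: sum_single_lookup)
qed

lemma subst_const: "subst \<sigma> (Poly_Mapping.single 0 c) = Poly_Mapping.single 0 c"
  by (simp add: subst_single)

lemma subst_one[simp]: "subst \<sigma> 1 = 1"
  using subst_const[of \<sigma> 1] by simp

lemma subst_pow: "subst \<sigma> (p ^ e) = subst \<sigma> p ^ e"
  by (induction e) (auto simp: subst_mult)

lemma subst_prod: "subst \<sigma> (prod f A) = (\<Prod>a\<in>A. subst \<sigma> (f a))"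
  by (induction A rule: infinite_finite_induct) (auto simp: subst_mult)

lemma subst_Var: "subst \<sigma> (Var v) = \<sigma> v"
  by (simp add: Var_def subst_single monom_def)

lemma subst_comp: "subst \<sigma> (subst \<tau> p) = subst (\<lambda>v. subst \<sigma> (\<tau> v)) p"
proof -
  have "subst \<sigma> (subst \<tau> p) = subst \<sigma> (\<Sum>m\<in>Poly_Mapping.keys p. Poly_Mapping.single 0 (Poly_Mapping.lookup p m) * monom \<tau> m)"
    by (simp only: subst_monom[of \<tau> p])
  also have "\<dots> = (\<Sum>m\<in>Poly_Mapping.keys p. Poly_Mapping.single 0 (Poly_Mapping.lookup p m) * monom (\<lambda>v. subst \<sigma> (\<tau> v)) m)"
    by (simp add: subst_sum subst_mult subst_const monom_def subst_prod subst_pow)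
  also have "\<dots> = subst (\<lambda>v. subst \<sigma> (\<tau> v)) p"
    by (simp only: subst_monom)
  finally show ?thesis .
qed

lemma polyring_zero: "0 \<in> polyring B"
  by (simp add: polyring_def)

lemma polyring_add: "p \<in> polyring B \<Longrightarrow> q \<in> polyring B \<Longrightarrow> p + q \<in> polyring B"
  unfolding polyring_def by (auto dest: subsetD[OF keys_add])

lemma polyring_mult:
  assumes "p \<in> polyring B" "q \<in> polyring B"
  shows "p * q \<in> (polyring B :: ((_ \<Rightarrow>\<^sub>0 nat) \<Rightarrow>\<^sub>0 'k::comm_ring_1) set)"
  unfolding polyring_def
proof (rule CollectI, intro ballI)
  fix m assume "m \<in> Poly_Mapping.keys (p * q)"
  then obtain a b where "m = a + b" "a \<in> Poly_Mapping.keys p" "b \<in> Poly_Mapping.keys q"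
    using keys_mult by blast
  then show "Poly_Mapping.keys m \<subseteq> B"
    using assms keys_add[of a b] unfolding polyring_def by blast
qed

lemma polyring_const: "Poly_Mapping.single 0 c \<in> polyring B"
  by (simp add: polyring_def)

lemma polyring_one: "(1 :: (_ \<Rightarrow>\<^sub>0 nat) \<Rightarrow>\<^sub>0 'k::comm_ring_1) \<in> polyring B"
  using polyring_const[of "1::'k"] by simp

lemma polyring_Var: "v \<in> B \<Longrightarrow> Var v \<in> polyring B"
  by (simp add: polyring_def Var_def)

lemma polyring_pow: "p \<in> polyring B \<Longrightarrow> (p :: (_ \<Rightarrow>\<^sub>0 nat) \<Rightarrow>\<^sub>0 'k::comm_ring_1) ^ e \<in> polyring B"
  by (induction e) (auto intro: polyring_mult polyring_one)

lemma polyring_sum: "(\<And>a. a \<in> A \<Longrightarrow> f a \<in> polyring B) \<Longrightarrow> sum f A \<in> polyring B"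
  by (induction A rule: infinite_finite_induct) (auto intro: polyring_add polyring_zero)

lemma polyring_prod: "(\<And>a. a \<in> A \<Longrightarrow> f a \<in> polyring B) \<Longrightarrow> (prod f A :: (_ \<Rightarrow>\<^sub>0 nat) \<Rightarrow>\<^sub>0 'k::comm_ring_1) \<in> polyring B"
  by (induction A rule: infinite_finite_induct) (auto intro: polyring_mult polyring_one)

lemma polyring_subst:
  assumes "p \<in> polyring A" "\<And>v. v \<in> A \<Longrightarrow> \<sigma> v \<in> polyring B"
  shows "subst \<sigma> p \<in> polyring B"
  unfolding subst_def
proof (intro polyring_sum polyring_mult polyring_const polyring_prod polyring_pow)
  fix m v assume "m \<in> Poly_Mapping.keys p" "v \<in> Poly_Mapping.keys m"
  then have "v \<in> A" using assms(1) unfolding polyring_def by blast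
  then show "\<sigma> v \<in> polyring B" by (rule assms(2))
qed

lemma subst_cong_polyring:
  assumes "p \<in> polyring A" "\<And>a. a \<in> A \<Longrightarrow> \<sigma> a = \<tau> a"
  shows "subst \<sigma> p = subst \<tau> p"
  unfolding subst_def using assms
  by (intro sum.cong refl arg_cong2[where f="(*)"] prod.cong) (fastforce simp: polyring_def)

lemma Var_pow: "(Var x :: ('v \<Rightarrow>\<^sub>0 nat) \<Rightarrow>\<^sub>0 'k::comm_ring_1) ^ e = Poly_Mapping.single (Poly_Mapping.single x e) 1"
  by (induction e) (simp_all add: Var_def mult_single flip: single_add)

lemma prod_single_one:
  "(\<Prod>v\<in>A. Poly_Mapping.single (f v) (1::'k::comm_ring_1)) = Poly_Mapping.single (\<Sum>v\<in>A. f v) 1"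
  by (induction A rule: infinite_finite_induct) (auto simp: mult_single)

definition push :: "('i \<Rightarrow> 'j) \<Rightarrow> ('i \<Rightarrow>\<^sub>0 nat) \<Rightarrow> ('j \<Rightarrow>\<^sub>0 nat)" where
  "push g a = (\<Sum>i\<in>Poly_Mapping.keys a. Poly_Mapping.single (g i) (Poly_Mapping.lookup a i))"

lemma lookup_push:
  "Poly_Mapping.lookup (push g a) j = (\<Sum>i\<in>Poly_Mapping.keys a \<inter> g -` {j}. Poly_Mapping.lookup a i)"
  by (simp add: push_def lookup_sum lookup_single when_def sum.inter_restrict vimage_def)

lemma keys_push: "Poly_Mapping.keys (push g a) \<subseteq> g ` Poly_Mapping.keys a"
  by (auto simp: in_keys_iff lookup_push intro: ccontr)

lemma lookup_push_inj:
  assumes "inj g"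
  shows "Poly_Mapping.lookup (push g a) (g i) = Poly_Mapping.lookup a i"
proof -
  have "Poly_Mapping.keys a \<inter> g -` {g i} = Poly_Mapping.keys a \<inter> {i}"
    using assms by (auto dest: injD)
  then show ?thesis
    by (cases "i \<in> Poly_Mapping.keys a") (auto simp: lookup_push in_keys_iff)
qed

lemma push_id: "push (\<lambda>i. i) a = a"
  using lookup_push_inj[of "\<lambda>i. i" a] by (intro poly_mapping_eqI) (simp add: inj_on_def)

lemma subst_Var_single:
  "subst (\<lambda>i. Var (g i)) (Poly_Mapping.single a c) =
     (Poly_Mapping.single (push g a) c :: (_ \<Rightarrow>\<^sub>0 'k::comm_ring_1))"
  by (simp add: subst_single monom_def Var_pow prod_single_one mult_single push_def)

lemma subst_Var_id: "subst Var p = p"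
proof -
  have "subst Var p = (\<Sum>m\<in>Poly_Mapping.keys p. subst (\<lambda>v. Var (id v)) (Poly_Mapping.single m (Poly_Mapping.lookup p m)))"
    by (subst sum_single_lookup[of p]) (simp add: subst_sum)
  also have "\<dots> = p"
    by (simp add: subst_Var_single push_id flip: sum_single_lookup)
  finally show ?thesis .
qed

lemma subst_image_toric_ideal_subset:
  assumes "\<And>a. a \<in> A \<Longrightarrow> f a \<in> B" and "\<And>a. a \<in> A \<Longrightarrow> f a = push g a"
  shows "subst (\<lambda>a. Var (f a)) ` toric_ideal A \<subseteq> (toric_ideal B :: (_ \<Rightarrow>\<^sub>0 'k::comm_ring_1) set)"
proof
  fix q :: "_ \<Rightarrow>\<^sub>0 'k" assume "q \<in> subst (\<lambda>a. Var (f a)) ` toric_ideal A"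
  then obtain p where p: "p \<in> polyring A" "subst (\<lambda>a. Poly_Mapping.single a 1) p = 0"
    and q: "q = subst (\<lambda>a. Var (f a)) p"
    unfolding toric_ideal_def by blast
  have "q \<in> polyring B"
    unfolding q using p(1) by (rule polyring_subst) (simp add: polyring_Var assms(1))
  moreover have "subst (\<lambda>b. Poly_Mapping.single b 1) q = 0"
  proof -
    have "subst (\<lambda>b. Poly_Mapping.single b 1) q = subst (\<lambda>a. Poly_Mapping.single (f a) 1) p"
      by (simp add: q subst_comp subst_Var)
    also have "\<dots> = subst (\<lambda>a. subst (\<lambda>i. Var (g i)) (Poly_Mapping.single a 1)) p"
      using p(1) by (rule subst_cong_polyring) (simp add: subst_Var_single assms(2))
    also have "\<dots> = 0"
      by (simp add: p(2) flip: subst_comp)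
    finally show ?thesis .
  qed
  ultimately show "q \<in> toric_ideal B"
    by (simp add: toric_ideal_def)
qed

lemma subst_Var_retraction:
  assumes "p \<in> polyring A" "\<And>a. a \<in> A \<Longrightarrow> f (s a) = a"
  shows "subst (\<lambda>b. Var (f b)) (subst (\<lambda>a. Var (s a)) p) = p"
proof -
  have "subst (\<lambda>b. Var (f b)) (subst (\<lambda>a. Var (s a)) p) = subst (\<lambda>a. Var (f (s a))) p"
    by (simp add: subst_comp subst_Var)
  also have "\<dots> = subst Var p"
    using assms by (intro subst_cong_polyring) auto
  finally show ?thesis by (simp add: subst_Var_id)
qed

lemma pi0_lookup:
  "Poly_Mapping.lookup (pi0 n k w) i = (if i \<in> {1..n} then (\<Sum>j\<in>{1..k i}. Poly_Mapping.lookup w (i,j)) else 0)"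
proof -
  have "finite {i. (if i \<in> {1..n} then (\<Sum>j\<in>{1..k i}. Poly_Mapping.lookup w (i,j)) else 0) \<noteq> 0}"
    by (rule finite_subset[of _ "{1..n}"]) auto
  then show ?thesis unfolding pi0_def by simp
qed

lemma pi0_eq_push_fst:
  assumes "Poly_Mapping.keys w \<subseteq> alpha_index n k"
  shows "pi0 n k w = push fst w"
proof (rule poly_mapping_eqI)
  fix i
  show "Poly_Mapping.lookup (pi0 n k w) i = Poly_Mapping.lookup (push fst w) i"
  proof (cases "i \<in> {1..n}")
    case True
    have "(\<Sum>j\<in>{1..k i}. Poly_Mapping.lookup w (i,j)) = (\<Sum>v\<in>Pair i ` {1..k i}. Poly_Mapping.lookup w v)"
      by (simp add: sum.reindex inj_on_def)
    also have "\<dots> = (\<Sum>v\<in>Poly_Mapping.keys w \<inter> fst -` {i}. Poly_Mapping.lookup w v)"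
      using assms by (intro sum.mono_neutral_right) (auto simp: in_keys_iff alpha_index_def)
    finally show ?thesis using True by (simp add: pi0_lookup lookup_push)
  next
    case False
    then have "Poly_Mapping.keys w \<inter> fst -` {i} = {}"
      using assms by (auto simp: alpha_index_def)
    then show ?thesis using False by (simp only: pi0_lookup if_False) (simp add: lookup_push)
  qed
qed

lemma pi0_push_first_column:
  assumes "Poly_Mapping.keys u \<subseteq> {1..n}" "\<forall>i\<in>{1..n}. 1 \<le> k i"
  shows "pi0 n k (push (\<lambda>i. (i, 1)) u) = u"
proof (rule poly_mapping_eqI)
  fix i
  have inj: "inj (\<lambda>i. (i, 1::nat))" by (simp add: inj_def)
  have column: "Poly_Mapping.lookup (push (\<lambda>i. (i, 1::nat)) u) (i, j) = (if j = 1 then Poly_Mapping.lookup u i else 0)"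
    for j
  proof (cases "j = 1")
    case True
    then show ?thesis using lookup_push_inj[OF inj] by simp
  next
    case False
    then have "(i, j) \<notin> Poly_Mapping.keys (push (\<lambda>i. (i, 1)) u)"
      using keys_push[of "\<lambda>i. (i, 1::nat)" u] by blast
    then show ?thesis using False by (simp add: in_keys_iff)
  qed
  show "Poly_Mapping.lookup (pi0 n k (push (\<lambda>i. (i, 1)) u)) i = Poly_Mapping.lookup u i"
  proof (cases "i \<in> {1..n}")
    case True
    have "Poly_Mapping.lookup (pi0 n k (push (\<lambda>i. (i, 1)) u)) i
        = (\<Sum>j\<in>{1..k i}. if j = 1 then Poly_Mapping.lookup u i else 0)"
      using True by (simp only: pi0_lookup if_True column)
    also have "\<dots> = Poly_Mapping.lookup u i"
      using True assms(2) by (simp only: sum.delta finite_atLeastAtMost) simp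
    finally show ?thesis .
  next
    case False
    then have "i \<notin> Poly_Mapping.keys u" using assms(1) by blast
    then show ?thesis using False by (simp only: pi0_lookup if_False) (simp add: in_keys_iff)
  qed
qed

lemma push_first_column_in_alpha_fibre:
  assumes "Poly_Mapping.keys u \<subseteq> {1..n}" "\<forall>i\<in>{1..n}. 1 \<le> k i"
  shows "push (\<lambda>i. (i, 1)) u \<in> alpha_fibre n k u"
proof -
  have "Poly_Mapping.keys (push (\<lambda>i. (i, 1::nat)) u) \<subseteq> alpha_index n k"
    using keys_push[of "\<lambda>i. (i, 1::nat)" u] assms by (auto simp: alpha_index_def)
  then show ?thesis
    using pi0_push_first_column[OF assms] by (simp add: alpha_fibre_def)
qed

theorem lemma2p3:
  fixes P :: "(nat \<Rightarrow>\<^sub>0 nat) set" and n :: nat and k :: "nat \<Rightarrow> nat"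
  assumes "discrete_polymatroid {1..n} P"
    and "\<forall>i\<in>{1..n}. 1 \<le> k i"
  shows "subst (\<lambda>w. Var (pi0 n k w)) ` toric_ideal (bases_alpha n k P)
         = (toric_ideal (bases P) :: ((((nat \<Rightarrow>\<^sub>0 nat) \<Rightarrow>\<^sub>0 nat) \<Rightarrow>\<^sub>0 ('k::field)) set))"
    (is "?\<gamma> ` ?I\<^sub>\<alpha> = ?I")
proof
  show "?\<gamma> ` ?I\<^sub>\<alpha> \<subseteq> ?I"
  proof (rule subst_image_toric_ideal_subset[where g = fst])
    fix w assume "w \<in> bases_alpha n k P"
    then have "pi0 n k w \<in> bases P" "Poly_Mapping.keys w \<subseteq> alpha_index n k"
      by (auto simp: bases_alpha_def alpha_fibre_def)
    then show "pi0 n k w \<in> bases P" "pi0 n k w = push fst w"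
      by (simp_all add: pi0_eq_push_fst)
  qed
  have keys_base: "Poly_Mapping.keys u \<subseteq> {1..n}" if "u \<in> bases P" for u
    using assms(1) that unfolding discrete_polymatroid_def bases_def by blast
  let ?s = "push (\<lambda>i. (i, 1::nat))"
  let ?\<delta> = "subst (\<lambda>u. Var (?s u))"
  have "?s u \<in> bases_alpha n k P" if "u \<in> bases P" for u
    using push_first_column_in_alpha_fibre[OF keys_base[OF that] assms(2)] that
    unfolding bases_alpha_def by blast
  then have "?\<delta> ` ?I \<subseteq> ?I\<^sub>\<alpha>"
    by (intro subst_image_toric_ideal_subset) simp_all
  show "?I \<subseteq> ?\<gamma> ` ?I\<^sub>\<alpha>"
  proof
    fix q assume q: "q \<in> ?I"
    have "?\<gamma> (?\<delta> q) = q"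
    proof (rule subst_Var_retraction)
      show "q \<in> polyring (bases P)" using q by (simp add: toric_ideal_def)
    qed (rule pi0_push_first_column[OF keys_base assms(2)])
    moreover have "?\<delta> q \<in> ?I\<^sub>\<alpha>"
      using \<open>?\<delta> ` ?I \<subseteq> ?I\<^sub>\<alpha>\<close> q by (rule subsetD[OF _ imageI])
    ultimately show "q \<in> ?\<gamma> ` ?I\<^sub>\<alpha>"
      by (rule image_eqI[OF sym])
  qed
qed

end
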